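(* Let $N\ge2$, $M\ge2$ and $Q$ be integers with $1\le Q\le M-1$, write $\mathcal{M}=\{1,\dots,M\}$, let $0<\epsilon<1$, and let $\mathbf{H}_1,\dots,\mathbf{H}_M$ be $N\times N$ real symmetric positive semidefinite matrices. Let $v^{\max}_{\rm QP}$ be the optimal value of (P2): maximize $\|\mathbf{w}\|^2$ over $\mathbf{w}\in\mathbb{R}^N$, $\boldsymbol\beta\in\{0,1\}^M$ subject to $\mathbf{w}^T\mathbf{H}_i\mathbf{w}\le\beta_i\epsilon+(1-\beta_i)$ ($i\in\mathcal{M}$) and $\sum_i\beta_i=Q$; and let $v^{\max}_{\rm SDP}$ be the optimal value of (SDP3): maximize $\mathrm{Tr}[\mathbf{X}]$ over real symmetric $N\times N$ matrices $\mathbf{X}\succeq0$ and $\boldsymbol\beta\in\mathbb{R}^M$ subject to $\mathrm{Tr}[\mathbf{H}_i\mathbf{X}]\le\beta_i\epsilon+(1-\beta_i)$ ($i\in\mathcal{M}$), $\sum_i\beta_i=Q$, $0\le\beta_i\le1$. Then $$v^{\max}_{\rm QP}\ge\frac{\epsilon}{\tilde c(\epsilon)}\cdot\frac{1}{200\ln(50K)}\,v^{\max}_{\rm SDP},$$ where $K=\sum_{i=1}^M\min\{\mathrm{rank}(\mathbf{H}_i),\sqrt{2M}\}$ and $\tilde c(\epsilon)=1-\frac{1-\epsilon}{M-Q+1}$. *)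

theory Defs
  imports "HOL-Analysis.Analysis"
begin

definition psd :: "real^'n^'n \<Rightarrow> bool" where
  "psd A \<longleftrightarrow> transpose A = A \<and> (\<forall>x. 0 \<le> x \<bullet> (A *v x))"

definition vQP :: "(nat \<Rightarrow> real^'n^'n) \<Rightarrow> nat \<Rightarrow> nat \<Rightarrow> real \<Rightarrow> ereal" where
  "vQP H M Q \<epsilon> = (SUP p \<in> {(w :: real^'n, \<beta> :: nat \<Rightarrow> real).
        (\<forall>i\<in>{1..M}. \<beta> i \<in> {0, 1}) \<and>
        (\<forall>i\<in>{1..M}. w \<bullet> (H i *v w) \<le> \<beta> i * \<epsilon> + (1 - \<beta> i)) \<and>
        (\<Sum>i=1..M. \<beta> i) = real Q}.
      ereal ((norm (fst p))\<^sup>2))"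

definition vSDP :: "(nat \<Rightarrow> real^'n^'n) \<Rightarrow> nat \<Rightarrow> nat \<Rightarrow> real \<Rightarrow> ereal" where
  "vSDP H M Q \<epsilon> = (SUP p \<in> {(X :: real^'n^'n, \<beta> :: nat \<Rightarrow> real).
        psd X \<and>
        (\<forall>i\<in>{1..M}. 0 \<le> \<beta> i \<and> \<beta> i \<le> 1) \<and>
        (\<forall>i\<in>{1..M}. trace (H i ** X) \<le> \<beta> i * \<epsilon> + (1 - \<beta> i)) \<and>
        (\<Sum>i=1..M. \<beta> i) = real Q}.
      ereal (trace (fst p)))"

end

theory Submission
  imports Defs "HOL-Probability.Hoeffding"
begin

text \<open>
  A feasible \<open>X\<close> of (SDP3) is, by the spectral theorem, a nonnegative combination of rank-one
  matrices \<open>u u\<^sup>T\<close> with orthonormal \<open>u\<close>; since only the numbers \<open>Tr[H\<^sub>i X]\<close> and \<open>Tr[X]\<close> matter,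
  Caratheodory's theorem reduces it to \<open>\<Sum>v\<in>F. t v \<cdot> v v\<^sup>T\<close> with \<open>card F \<le> M + 1\<close>.
  For signs \<open>\<sigma>\<close>, the vector \<open>w = \<Sum>v\<in>F. \<sigma>\<^sub>v \<surd>(t v) v\<close> has \<open>\<parallel>w\<parallel>\<^sup>2 = Tr[X]\<close>, and on \<open>span F\<close> each form
  \<open>w\<^sup>T H\<^sub>i w\<close> is a sum of \<open>min (rank H\<^sub>i) (M + 1)\<close> squares of Rademacher sums, \<open>\<le> K\<^sup>2\<close> squares in total.
  Each square exceeds \<open>s\<close> times its mean with probability at most \<open>2 e\<^sup>-\<^sup>s\<^sup>/\<^sup>2\<close> (Hoeffding), so for
  \<open>s = 200 ln (50 K)\<close> a union bound leaves signs with \<open>w\<^sup>T H\<^sub>i w \<le> s Tr[H\<^sub>i X]\<close> for all \<open>i\<close>;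
  probabilities are replaced by counting subsets of \<open>F\<close>. Finally at least \<open>Q\<close> of the \<open>\<beta>\<^sub>i\<close> are
  \<open>\<ge> \<theta> = 1 / (M - Q + 1)\<close>; for those, \<open>Tr[H\<^sub>i X] \<le> 1 - (1 - \<epsilon>) \<theta> = c\<close>, so setting them to 1 and
  scaling \<open>w\<close> by \<open>\<surd>(\<epsilon> / (c s))\<close> gives a feasible point of (P2).
\<close>

section \<open>Orthonormal sets and the spectral theorem\<close>

definition orthonormal :: "'a::real_inner set \<Rightarrow> bool" where
  "orthonormal B \<longleftrightarrow> pairwise orthogonal B \<and> (\<forall>u\<in>B. norm u = 1)"

lemma orthonormal_imp_finite: "orthonormal (B :: 'a::euclidean_space set) \<Longrightarrow> finite B"
  by (simp add: orthonormal_def pairwise_orthogonal_imp_finite)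

lemma orthonormal_subset: "orthonormal B \<Longrightarrow> C \<subseteq> B \<Longrightarrow> orthonormal C"
  by (auto simp: orthonormal_def pairwise_subset)

lemma orthonormal_inner: "orthonormal B \<Longrightarrow> u \<in> B \<Longrightarrow> v \<in> B \<Longrightarrow> u \<bullet> v = (if u = v then 1 else 0)"
  by (auto simp: orthonormal_def pairwise_def orthogonal_def norm_eq_1)

lemma selfadjoint_psd_isotropic_imp_zero:
  fixes f :: "'a::real_inner \<Rightarrow> 'a"
  assumes f: "linear f" "\<And>x y. f x \<bullet> y = x \<bullet> f y"
    and S: "subspace S" "\<And>y. y \<in> S \<Longrightarrow> 0 \<le> y \<bullet> f y"
    and u: "u \<in> S" "f u \<in> S" "u \<bullet> f u = 0"
  shows "f u = 0"
proof -
  define v where "v = f u"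
  define a where "a = v \<bullet> v"
  define b where "b = v \<bullet> f v"
  have b: "0 \<le> b" using S(2) u(2) by (simp add: b_def v_def)
  \<comment> \<open>The quadratic \<open>t \<mapsto> (u + t v) \<bullet> f (u + t v)\<close> vanishes at \<open>0\<close> and is nonnegative, so its slope \<open>2 (v \<bullet> v)\<close> there is \<open>0\<close>.\<close>
  have "0 \<le> 2 * t * a + t\<^sup>2 * b" for t
  proof -
    have "0 \<le> (u + t *\<^sub>R v) \<bullet> f (u + t *\<^sub>R v)"
      using S u by (simp add: v_def subspace_add subspace_scale)
    also have "\<dots> = u \<bullet> f u + 2 * t * (u \<bullet> f v) + t\<^sup>2 * b"
      using f by (simp add: linear_add linear_scale b_def
          algebra_simps power2_eq_square inner_commute)
    finally show ?thesis using u(3) f(2)[of u v] by (simp add: a_def v_def inner_commute)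
  qed
  from this[of "- a / (b + 1)"] have "0 \<le> - (a\<^sup>2 * (b + 2)) / (b + 1)\<^sup>2"
    using b by (simp add: power2_eq_square divide_simps) (simp add: algebra_simps)
  hence "a\<^sup>2 * (b + 2) \<le> 0"
    using b by (simp add: divide_le_0_iff)
  hence "a = 0" using b by (simp add: mult_le_0_iff)
  thus ?thesis by (simp add: a_def v_def)
qed

lemma rayleigh_maximizer_exists:
  fixes f :: "'a::euclidean_space \<Rightarrow> 'a"
  assumes "linear f" "subspace S" "S \<noteq> {0}"
  obtains u where "u \<in> S" "norm u = 1" "\<And>y. y \<in> S \<Longrightarrow> y \<bullet> f y \<le> (u \<bullet> f u) * (y \<bullet> y)"
proof -
  define U where "U = S \<inter> sphere 0 1"
  have "compact U"
    unfolding U_def using closed_subspace[OF assms(2)] by (simp add: closed_Int_compact)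
  moreover obtain x where "x \<in> S" "x \<noteq> 0" using assms(2,3) subspace_0 by blast
  then have "x /\<^sub>R norm x \<in> U" using assms(2) by (simp add: U_def subspace_scale)
  hence "U \<noteq> {}" by blast
  moreover have "continuous_on U (\<lambda>y. y \<bullet> f y)"
    using assms(1) by (intro continuous_intros linear_continuous_on linear_conv_bounded_linear[THEN iffD1])
  ultimately have "\<exists>u\<in>U. \<forall>y\<in>U. y \<bullet> f y \<le> u \<bullet> f u"
    by (rule continuous_attains_sup)
  then obtain u where u: "u \<in> U" and max: "\<And>y. y \<in> U \<Longrightarrow> y \<bullet> f y \<le> u \<bullet> f u"
    by blast
  show thesis
  proof (rule that)
    show "u \<in> S" "norm u = 1" using u by (auto simp: U_def)
    fix y assume y: "y \<in> S"
    show "y \<bullet> f y \<le> (u \<bullet> f u) * (y \<bullet> y)"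
    proof (cases "y = 0")
      case False
      have "y /\<^sub>R norm y \<in> U" using y False assms(2) by (simp add: U_def subspace_scale)
      moreover have "(y /\<^sub>R norm y) \<bullet> f (y /\<^sub>R norm y) = y \<bullet> f y / (y \<bullet> y)"
        by (simp add: linear_scale[OF assms(1)] power2_norm_eq_inner[symmetric] power2_eq_square divide_inverse)
      ultimately have "y \<bullet> f y / (y \<bullet> y) \<le> u \<bullet> f u" using max by metis
      thus ?thesis using False by (simp add: divide_le_eq)
    qed (simp add: linear_0[OF assms(1)])
  qed
qed

lemma selfadjoint_rayleigh_maximizer_eigenvector:
  fixes f :: "'a::real_inner \<Rightarrow> 'a"
  assumes f: "linear f" "\<And>x y. f x \<bullet> y = x \<bullet> f y"
    and S: "subspace S" "\<And>x. x \<in> S \<Longrightarrow> f x \<in> S"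
    and u: "u \<in> S" "norm u = 1" "\<And>y. y \<in> S \<Longrightarrow> y \<bullet> f y \<le> (u \<bullet> f u) * (y \<bullet> y)"
  shows "f u = (u \<bullet> f u) *\<^sub>R u"
proof -
  define l where "l = u \<bullet> f u"
  define g where "g x = l *\<^sub>R x - f x" for x
  have "g u = 0"
  proof (rule selfadjoint_psd_isotropic_imp_zero[of g S u])
    show "linear g" unfolding g_def using f(1) by (intro linear_compose_sub linear_scaleR f(1))
    show "g x \<bullet> y = x \<bullet> g y" for x y
      using f(2) by (simp add: g_def inner_diff_left inner_diff_right inner_commute)
    show "0 \<le> y \<bullet> g y" if "y \<in> S" for y
      using u(3)[OF that] by (simp add: g_def l_def inner_diff_right mult.commute)
    show "g u \<in> S" using S u(1) by (simp add: g_def subspace_diff subspace_scale)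
    show "u \<bullet> g u = 0" using u(2) by (simp add: g_def l_def inner_diff_right dot_square_norm)
  qed (use S u in auto)
  thus ?thesis by (simp add: g_def l_def)
qed

lemma span_insert_orthogonal_complement:
  assumes S: "subspace S" and u: "u \<in> S" "u \<bullet> u = 1" and B: "span B = {y\<in>S. u \<bullet> y = 0}"
  shows "span (insert u B) = S"
proof
  have "B \<subseteq> S" using B span_superset by blast
  thus "span (insert u B) \<subseteq> S" using u(1) S by (intro span_minimal) auto
  show "S \<subseteq> span (insert u B)"
  proof
    fix y assume "y \<in> S"
    hence "y - (u \<bullet> y) *\<^sub>R u \<in> span B"
      using B u S by (simp add: subspace_diff subspace_scale inner_diff_right)
    hence "(y - (u \<bullet> y) *\<^sub>R u) + (u \<bullet> y) *\<^sub>R u \<in> span (insert u B)"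
      by (meson span_add span_base span_mono span_mul insertI1 subset_insertI subsetD)
    thus "y \<in> span (insert u B)" by simp
  qed
qed

lemma selfadjoint_invariant_subspace_eigenbasis:
  fixes f :: "'a::euclidean_space \<Rightarrow> 'a"
  assumes f: "linear f" "\<And>x y. f x \<bullet> y = x \<bullet> f y"
  shows "subspace S \<Longrightarrow> (\<And>x. x \<in> S \<Longrightarrow> f x \<in> S) \<Longrightarrow>
    \<exists>B. B \<subseteq> S \<and> orthonormal B \<and> (\<forall>u\<in>B. f u = (u \<bullet> f u) *\<^sub>R u) \<and> span B = S"
proof (induction "dim S" arbitrary: S rule: less_induct)
  case less
  show ?case
  proof (cases "S = {0}")
    case True
    thus ?thesis by (intro exI[of _ "{}"]) (auto simp: orthonormal_def)
  next
    case False
    obtain u where u: "u \<in> S" "norm u = 1" "\<And>y. y \<in> S \<Longrightarrow> y \<bullet> f y \<le> (u \<bullet> f u) * (y \<bullet> y)"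
      using rayleigh_maximizer_exists[OF f(1) less.prems(1) False] by blast
    have eig: "f u = (u \<bullet> f u) *\<^sub>R u"
      using selfadjoint_rayleigh_maximizer_eigenvector[OF f less.prems u] .
    have uu: "u \<bullet> u = 1" using u(2) by (simp add: norm_eq_1)
    define S' where "S' = {y\<in>S. u \<bullet> y = 0}"
    have S': "subspace S'"
      using less.prems(1) by (auto simp: S'_def subspace_def inner_add_right)
    have inv: "f y \<in> S'" if "y \<in> S'" for y
    proof -
      have "u \<bullet> f y = (u \<bullet> f u) * (u \<bullet> y)"
        by (metis eig f(2) inner_scaleR_left)
      thus ?thesis using that less.prems(2) by (simp add: S'_def)
    qed
    have "span S' \<subset> span S"
      using S' less.prems(1) u(1) uu by (metis (mono_tags) S'_def mem_Collect_eq psubsetI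
          span_eq_iff subsetI zero_neq_one)
    hence "dim S' < dim S" by (rule dim_psubset)
    then obtain B where B: "B \<subseteq> S'" "orthonormal B" "\<forall>v\<in>B. f v = (v \<bullet> f v) *\<^sub>R v" "span B = S'"
      using less.hyps[OF _ S' inv] by blast
    have "span (insert u B) = S"
      using less.prems(1) u(1) uu B(4) unfolding S'_def by (rule span_insert_orthogonal_complement)
    moreover have "orthonormal (insert u B)"
      using B(1,2) u(2) uu
      by (auto simp: orthonormal_def pairwise_insert S'_def orthogonal_def inner_commute)
    ultimately show ?thesis
      using B u(1) eig by (intro exI[of _ "insert u B"]) (auto simp: S'_def)
  qed
qed

lemma orthonormal_expansion:
  fixes B :: "'a::euclidean_space set"
  assumes "orthonormal B" "x \<in> span B"
  shows "x = (\<Sum>u\<in>B. (u \<bullet> x) *\<^sub>R u)"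
proof -
  have fin: "finite B" using assms(1) by (rule orthonormal_imp_finite)
  obtain c where c: "x = (\<Sum>v\<in>B. c v *\<^sub>R v)"
    using assms(2) span_finite[OF fin] by auto
  have "u \<bullet> x = c u" if "u \<in> B" for u
    using assms(1) that fin
    by (simp add: c inner_sum_right orthonormal_inner if_distrib cong: if_cong)
  thus ?thesis by (simp add: c)
qed

lemma norm_orthonormal_sum:
  fixes F :: "'a::euclidean_space set"
  assumes "orthonormal F"
  shows "(norm (\<Sum>v\<in>F. a v *\<^sub>R v))\<^sup>2 = (\<Sum>v\<in>F. (a v)\<^sup>2)"
proof -
  have "(norm (\<Sum>v\<in>F. a v *\<^sub>R v))\<^sup>2 = (\<Sum>v\<in>F. (norm (a v *\<^sub>R v))\<^sup>2)"
    using orthonormal_imp_finite[OF assms] assms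
    by (intro norm_sum_Pythagorean) (auto simp: orthonormal_def pairwise_def orthogonal_clauses)
  thus ?thesis using assms by (simp add: orthonormal_def)
qed

definition outer :: "real^'n \<Rightarrow> real^'n^'n" where
  "outer u = (\<chi> i j. u $ i * u $ j)"

lemma outer_mult_vector: "outer u *v x = (u \<bullet> x) *\<^sub>R u"
  by (simp add: outer_def matrix_vector_mult_def inner_vec_def vec_eq_iff sum_distrib_left mult_ac)

lemma inner_outer: "A \<bullet> outer u = u \<bullet> (A *v u)"
  by (simp add: outer_def inner_vec_def matrix_vector_mult_def sum_distrib_left mult_ac)

lemma outer_inner_outer: "outer u \<bullet> outer v = (u \<bullet> v)\<^sup>2"
  by (simp add: inner_outer outer_mult_vector power2_eq_square inner_commute)

lemma trace_matrix_mult_eq_inner: "trace (A ** B) = A \<bullet> transpose (B :: real^'n^'n)"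
  by (simp add: trace_def matrix_matrix_mult_def inner_vec_def transpose_def mult.commute)

lemma sum_matrix_vector_mult: "(\<Sum>a\<in>S. A a) *v x = (\<Sum>a\<in>S. A a *v x)"
  by (induction S rule: infinite_finite_induct) (simp_all add: matrix_vector_mult_add_rdistrib)

lemma sum_scaleR_outer_mult_vector:
  "(\<Sum>u\<in>B. c u *\<^sub>R outer u) *v x = (\<Sum>u\<in>B. (c u * (u \<bullet> x)) *\<^sub>R u)"
  unfolding sum_matrix_vector_mult
  by (rule sum.cong) (simp_all add: outer_mult_vector scaleR_matrix_vector_assoc[symmetric])

lemma symmetric_matrix_spectral_decomposition:
  fixes A :: "real^'n^'n"
  assumes "transpose A = A"
  obtains B l where "orthonormal B" "span B = UNIV" "\<And>u. u \<in> B \<Longrightarrow> A *v u = l u *\<^sub>R u"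
    "A = (\<Sum>u\<in>B. l u *\<^sub>R outer u)"
proof -
  define l where "l u = u \<bullet> (A *v u)" for u
  have "linear ((*v) A)" by simp
  moreover have "(A *v x) \<bullet> y = x \<bullet> (A *v y)" for x y
    by (metis assms dot_lmul_matrix transpose_matrix_vector)
  ultimately obtain B where B: "orthonormal B" "span B = UNIV" "\<And>u. u \<in> B \<Longrightarrow> A *v u = l u *\<^sub>R u"
    using selfadjoint_invariant_subspace_eigenbasis[of "(*v) A" UNIV] unfolding l_def by auto
  have "A *v x = (\<Sum>u\<in>B. l u *\<^sub>R outer u) *v x" for x
  proof -
    have "x = (\<Sum>u\<in>B. (u \<bullet> x) *\<^sub>R u)"
      using orthonormal_expansion[OF B(1)] B(2) by blast
    hence "A *v x = A *v (\<Sum>u\<in>B. (u \<bullet> x) *\<^sub>R u)"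
      by (rule arg_cong)
    also have "\<dots> = (\<Sum>u\<in>B. (u \<bullet> x) *\<^sub>R (A *v u))"
      by (simp add: matrix_vector_mult_scaleR vec.sum)
    also have "\<dots> = (\<Sum>u\<in>B. l u *\<^sub>R outer u) *v x"
      unfolding sum_scaleR_outer_mult_vector by (simp add: B(3) mult.commute)
    finally show ?thesis .
  qed
  hence "A = (\<Sum>u\<in>B. l u *\<^sub>R outer u)"
    by (rule matrix_eq[THEN iffD2, OF allI])
  with B show thesis by (rule that)
qed

lemma psd_spectral_decomposition:
  fixes A :: "real^'n^'n"
  assumes "psd A"
  obtains B l where "orthonormal B" "\<And>u. u \<in> B \<Longrightarrow> 0 \<le> l u" "\<And>u. u \<in> B \<Longrightarrow> A *v u = l u *\<^sub>R u"
    "A = (\<Sum>u\<in>B. l u *\<^sub>R outer u)"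
proof -
  have "transpose A = A" using assms by (simp add: psd_def)
  then obtain B l where B: "orthonormal B" "\<And>u. u \<in> B \<Longrightarrow> A *v u = l u *\<^sub>R u"
    "A = (\<Sum>u\<in>B. l u *\<^sub>R outer u)"
    using symmetric_matrix_spectral_decomposition by blast
  have "0 \<le> l u" if "u \<in> B" for u
  proof -
    have "u \<bullet> (A *v u) = l u" using B(2)[OF that] orthonormal_inner[OF B(1) that that] by simp
    moreover have "0 \<le> u \<bullet> (A *v u)" using assms by (simp add: psd_def)
    ultimately show ?thesis by simp
  qed
  with B show thesis by (intro that) auto
qed

lemma orthonormal_eigenvectors_card_le_rank:
  fixes A :: "real^'n^'n"
  assumes E: "orthonormal E" and eig: "\<And>u. u \<in> E \<Longrightarrow> A *v u = l u *\<^sub>R u \<and> l u \<noteq> 0"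
  shows "card E \<le> rank A"
proof -
  have "E \<subseteq> range ((*v) A)"
  proof
    fix u assume "u \<in> E"
    hence "A *v ((1 / l u) *\<^sub>R u) = u" using eig by (simp add: matrix_vector_mult_scaleR)
    thus "u \<in> range ((*v) A)" by (metis rangeI)
  qed
  moreover have "independent E"
    using E by (intro pairwise_orthogonal_independent) (auto simp: orthonormal_def)
  ultimately show ?thesis unfolding rank_dim_range by (rule independent_card_le_dim)
qed

lemma psd_sum_of_squares:
  fixes G :: "real^'n^'n"
  assumes "psd G"
  obtains C where "finite C" "card C \<le> rank G" "\<And>x. x \<bullet> (G *v x) = (\<Sum>c\<in>C. (c \<bullet> x)\<^sup>2)"
proof -
  obtain B l where B: "orthonormal B" "\<And>u. u \<in> B \<Longrightarrow> 0 \<le> l u"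
    "\<And>u. u \<in> B \<Longrightarrow> G *v u = l u *\<^sub>R u" "G = (\<Sum>u\<in>B. l u *\<^sub>R outer u)"
    using psd_spectral_decomposition[OF assms] by blast
  note l = B(2)
  define E where "E = {u\<in>B. l u \<noteq> 0}"
  define \<gamma> where "\<gamma> u = sqrt (l u) *\<^sub>R u" for u
  have finB: "finite B" using B(1) by (rule orthonormal_imp_finite)
  have inj: "inj_on \<gamma> E"
  proof (rule inj_onI)
    fix u v assume "u \<in> E" "v \<in> E" "\<gamma> u = \<gamma> v"
    hence "\<gamma> u \<bullet> \<gamma> v \<noteq> 0" using l by (simp add: E_def \<gamma>_def orthonormal_inner[OF B(1)])
    thus "u = v" using \<open>u \<in> E\<close> \<open>v \<in> E\<close>
      by (auto simp: E_def \<gamma>_def orthonormal_inner[OF B(1)] split: if_splits)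
  qed
  have "x \<bullet> (G *v x) = (\<Sum>c\<in>\<gamma> ` E. (c \<bullet> x)\<^sup>2)" for x
  proof -
    have "x \<bullet> (G *v x) = (\<Sum>u\<in>B. l u * (u \<bullet> x)\<^sup>2)"
      unfolding inner_outer[symmetric] B(4) by (simp add: inner_sum_left outer_inner_outer)
    also have "\<dots> = (\<Sum>u\<in>E. l u * (u \<bullet> x)\<^sup>2)"
      using finB by (intro sum.mono_neutral_right) (auto simp: E_def)
    also have "\<dots> = (\<Sum>c\<in>\<gamma> ` E. (c \<bullet> x)\<^sup>2)"
      unfolding sum.reindex[OF inj] comp_def \<gamma>_def using l by (simp add: E_def power_mult_distrib)
    finally show ?thesis .
  qed
  moreover have "card E \<le> rank G"
    using orthonormal_subset[OF B(1)] B(3) by (intro orthonormal_eigenvectors_card_le_rank) (auto simp: E_def)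
  hence "card (\<gamma> ` E) \<le> rank G" using card_image_le[of E \<gamma>] finB by (simp add: E_def)
  ultimately show thesis using finB by (intro that[of "\<gamma> ` E"]) (auto simp: E_def)
qed

lemma psd_compression_sum_of_squares:
  fixes H :: "real^'n^'n"
  assumes H: "psd H" and F: "orthonormal F"
  obtains C where "finite C" "card C \<le> rank H" "card C \<le> card F"
    "\<And>x. x \<in> span F \<Longrightarrow> x \<bullet> (H *v x) = (\<Sum>c\<in>C. (c \<bullet> x)\<^sup>2)"
proof -
  \<comment> \<open>\<open>P\<close> is the orthogonal projection onto \<open>span F\<close>, so \<open>P H P\<close> agrees with \<open>H\<close> there and has rank \<open>\<le> card F\<close>.\<close>
  define P where "P = (\<Sum>v\<in>F. outer v)"
  have Px: "P *v x = (\<Sum>v\<in>F. (v \<bullet> x) *\<^sub>R v)" for x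
    by (simp add: P_def sum_matrix_vector_mult outer_mult_vector)
  have P: "transpose P = P"
    by (simp add: P_def transpose_def outer_def vec_eq_iff sum_component mult.commute)
  define G where "G = P ** H ** P"
  have Gx: "x \<bullet> (G *v x) = (P *v x) \<bullet> (H *v (P *v x))" for x
    by (metis G_def P dot_lmul_matrix matrix_vector_mul_assoc transpose_matrix_vector)
  have "psd G"
    using H P Gx by (simp add: psd_def G_def matrix_transpose_mul matrix_mul_assoc)
  then obtain C where C: "finite C" "card C \<le> rank G" "\<And>x. x \<bullet> (G *v x) = (\<Sum>c\<in>C. (c \<bullet> x)\<^sup>2)"
    using psd_sum_of_squares by blast
  have "rank G \<le> rank H"
    unfolding G_def by (meson order_trans rank_mul_le_left rank_mul_le_right)
  moreover have "rank G \<le> card F"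
  proof -
    have "P *v x \<in> span F" for x
      unfolding Px by (rule span_sum, rule span_mul, erule span_base)
    hence "range ((*v) P) \<subseteq> span F" by blast
    hence "rank P \<le> card F"
      unfolding rank_dim_range using dim_le_card orthonormal_imp_finite[OF F] by blast
    thus ?thesis
      unfolding G_def by (metis matrix_mul_assoc rank_mul_le_left order_trans)
  qed
  moreover have "x \<bullet> (H *v x) = (\<Sum>c\<in>C. (c \<bullet> x)\<^sup>2)" if "x \<in> span F" for x
    using C(3)[of x] Gx[of x] orthonormal_expansion[OF F that] by (simp add: Px)
  ultimately show thesis using C by (intro that[of C]) auto
qed

section \<open>Reducing the rank of a semidefinite solution\<close>

lemma span_representative:
  fixes x :: "'a::euclidean_space"
  obtains y where "y \<in> span H" "\<And>h. h \<in> H \<Longrightarrow> h \<bullet> y = h \<bullet> x"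
proof -
  obtain y z where "y \<in> span H" "\<And>w. w \<in> span H \<Longrightarrow> orthogonal z w" "x = y + z"
    using orthogonal_subspace_decomp_exists by blast
  thus thesis
    by (intro that[of y]) (auto simp: inner_add_right orthogonal_def inner_commute span_base)
qed

lemma caratheodory_subfamily:
  fixes b :: "'b \<Rightarrow> 'a::euclidean_space"
  assumes B: "finite B" and lam: "\<And>u. u \<in> B \<Longrightarrow> 0 \<le> lam u"
  obtains F t where "F \<subseteq> B" "int (card F) \<le> aff_dim (b ` B) + 1" "\<And>u. u \<in> F \<Longrightarrow> 0 \<le> t u"
    "(\<Sum>u\<in>F. t u) = (\<Sum>u\<in>B. lam u)" "(\<Sum>u\<in>F. t u *\<^sub>R b u) = (\<Sum>u\<in>B. lam u *\<^sub>R b u)"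
proof (cases "(\<Sum>u\<in>B. lam u) = 0")
  case True
  hence "lam u = 0" if "u \<in> B" for u using B lam that sum_nonneg_eq_0_iff by blast
  thus thesis using aff_dim_geq[of "b ` B"] by (intro that[of "{}"]) simp_all
next
  case False
  define T where "T = (\<Sum>u\<in>B. lam u)"
  have T: "0 < T" using False lam by (simp add: T_def order_le_neq_trans sum_nonneg)
  have "(\<Sum>u\<in>B. (lam u / T) *\<^sub>R b u) \<in> convex hull (b ` B)"
    using B T lam by (intro convex_sum convex_convex_hull hull_inc)
      (auto simp: T_def sum_divide_distrib[symmetric])
  then obtain S mu where S: "S \<subseteq> b ` B" "card S \<le> aff_dim (b ` B) + 1"
    "\<And>s. s \<in> S \<Longrightarrow> 0 \<le> mu s" "sum mu S = 1" "(\<Sum>s\<in>S. mu s *\<^sub>R s) = (\<Sum>u\<in>B. (lam u / T) *\<^sub>R b u)"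
    unfolding convex_hull_caratheodory_aff_dim by blast
  define g where "g s = (SOME u. u \<in> B \<and> b u = s)" for s
  have g: "g s \<in> B" "b (g s) = s" if "s \<in> S" for s
    using someI_ex[of "\<lambda>u. u \<in> B \<and> b u = s"] S(1) that by (auto simp: g_def)
  have inj: "inj_on g S" by (metis g(2) inj_onI)
  define t where "t u = T * mu (b u)" for u
  show thesis
  proof (rule that[of "g ` S" t])
    show "g ` S \<subseteq> B" using g(1) by blast
    show "int (card (g ` S)) \<le> aff_dim (b ` B) + 1" using S(2) card_image[OF inj] by simp
    show "0 \<le> t u" if "u \<in> g ` S" for u using that S(3) T g(2) by (auto simp: t_def)
    show "(\<Sum>u\<in>g ` S. t u) = (\<Sum>u\<in>B. lam u)"
      using S(4) by (simp add: sum.reindex[OF inj] t_def g(2) T_def flip: sum_distrib_left)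
    have "(\<Sum>u\<in>g ` S. t u *\<^sub>R b u) = T *\<^sub>R (\<Sum>s\<in>S. mu s *\<^sub>R s)"
      by (simp add: sum.reindex[OF inj] t_def g(2) scaleR_sum_right)
    also have "\<dots> = (\<Sum>u\<in>B. lam u *\<^sub>R b u)"
      using T by (simp add: S(5) scaleR_sum_right)
    finally show "(\<Sum>u\<in>g ` S. t u *\<^sub>R b u) = (\<Sum>u\<in>B. lam u *\<^sub>R b u)" .
  qed
qed

lemma caratheodory_reweighting:
  fixes \<phi> :: "'b \<Rightarrow> 'a::euclidean_space" and h :: "'i \<Rightarrow> 'a"
  assumes B: "finite B" and I: "finite I" and lam: "\<And>u. u \<in> B \<Longrightarrow> 0 \<le> lam u"
  obtains F t where "F \<subseteq> B" "card F \<le> card I + 1" "\<And>u. u \<in> F \<Longrightarrow> 0 \<le> t u"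
    "(\<Sum>u\<in>F. t u) = (\<Sum>u\<in>B. lam u)"
    "\<And>i. i \<in> I \<Longrightarrow> (\<Sum>u\<in>F. t u * (h i \<bullet> \<phi> u)) = (\<Sum>u\<in>B. lam u * (h i \<bullet> \<phi> u))"
proof -
  \<comment> \<open>Projecting each \<open>\<phi> u\<close> onto \<open>span (h ` I)\<close> keeps all the \<open>h i \<bullet> \<phi> u\<close> and puts the points into
    an affine space of dimension \<open>\<le> card I\<close>, where Caratheodory's theorem applies.\<close>
  define V where "V = span (h ` I)"
  have "\<forall>u. \<exists>y. y \<in> V \<and> (\<forall>i\<in>I. h i \<bullet> y = h i \<bullet> \<phi> u)"
  proof
    fix u show "\<exists>y. y \<in> V \<and> (\<forall>i\<in>I. h i \<bullet> y = h i \<bullet> \<phi> u)"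
      by (rule span_representative[of "h ` I" "\<phi> u"]) (auto simp: V_def)
  qed
  then obtain b where "\<forall>u. b u \<in> V \<and> (\<forall>i\<in>I. h i \<bullet> b u = h i \<bullet> \<phi> u)"
    by (rule choice[THEN exE])
  hence b: "\<And>u. b u \<in> V" "\<And>u i. i \<in> I \<Longrightarrow> h i \<bullet> b u = h i \<bullet> \<phi> u"
    by auto
  have "aff_dim (b ` B) \<le> int (card I)"
  proof -
    have "aff_dim (b ` B) \<le> aff_dim V" using b(1) by (intro aff_dim_subset) auto
    also have "\<dots> = int (dim V)" by (simp add: V_def aff_dim_subspace)
    also have "dim V \<le> card (h ` I)" unfolding V_def using I by (intro dim_le_card) auto
    also have "\<dots> \<le> card I" using I by (rule card_image_le)
    finally show ?thesis by simp
  qed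
  show thesis
  proof (rule caratheodory_subfamily[where b = b, OF B lam])
    fix F t
    assume F: "F \<subseteq> B" "int (card F) \<le> aff_dim (b ` B) + 1" "\<And>u. u \<in> F \<Longrightarrow> 0 \<le> t u"
      "(\<Sum>u\<in>F. t u) = (\<Sum>u\<in>B. lam u)" "(\<Sum>u\<in>F. t u *\<^sub>R b u) = (\<Sum>u\<in>B. lam u *\<^sub>R b u)"
    have "(\<Sum>u\<in>F. t u * (h i \<bullet> \<phi> u)) = (\<Sum>u\<in>B. lam u * (h i \<bullet> \<phi> u))" if "i \<in> I" for i
      using arg_cong[OF F(5), of "\<lambda>x. h i \<bullet> x"] that by (simp add: inner_sum_right b(2))
    moreover have "card F \<le> card I + 1" using F(2) \<open>aff_dim (b ` B) \<le> int (card I)\<close> by linarith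
    ultimately show thesis using F(1,3,4) that by blast
  qed
qed

lemma psd_low_rank_reduction:
  fixes X :: "real^'n^'n" and H :: "'i \<Rightarrow> real^'n^'n"
  assumes X: "psd X" and I: "finite I"
  obtains F t where "orthonormal F" "card F \<le> card I + 1" "\<And>v. v \<in> F \<Longrightarrow> 0 \<le> t v"
    "(\<Sum>v\<in>F. t v) = trace X" "\<And>i. i \<in> I \<Longrightarrow> (\<Sum>v\<in>F. t v * (v \<bullet> (H i *v v))) = trace (H i ** X)"
proof -
  obtain B l where B: "orthonormal B" "\<And>u. u \<in> B \<Longrightarrow> 0 \<le> l u" "X = (\<Sum>u\<in>B. l u *\<^sub>R outer u)"
    using psd_spectral_decomposition[OF X] by blast
  have "transpose X = X" using X by (simp add: psd_def)
  have tr: "trace (G ** X) = (\<Sum>u\<in>B. l u * (u \<bullet> (G *v u)))" for G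
    unfolding trace_matrix_mult_eq_inner \<open>transpose X = X\<close>
    by (subst B(3)) (simp add: inner_sum_right inner_outer)
  show thesis
  proof (rule caratheodory_reweighting[where \<phi> = outer and h = H, OF orthonormal_imp_finite[OF B(1)] I B(2)])
    fix F t
    assume F: "F \<subseteq> B" "card F \<le> card I + 1" "\<And>u. u \<in> F \<Longrightarrow> 0 \<le> t u"
      "(\<Sum>u\<in>F. t u) = (\<Sum>u\<in>B. l u)"
      "\<And>i. i \<in> I \<Longrightarrow> (\<Sum>u\<in>F. t u * (H i \<bullet> outer u)) = (\<Sum>u\<in>B. l u * (H i \<bullet> outer u))"
    show thesis
    proof (rule that[of F t])
      show "orthonormal F" using orthonormal_subset[OF B(1) F(1)] .
      show "(\<Sum>v\<in>F. t v) = trace X"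
        using tr[of "mat 1"] orthonormal_inner[OF B(1)] by (simp add: F(4) matrix_mul_lid)
      show "(\<Sum>v\<in>F. t v * (v \<bullet> (H i *v v))) = trace (H i ** X)" if "i \<in> I" for i
        using F(5)[OF that] by (simp add: tr inner_outer)
    qed (use F in auto)
  qed
qed

section \<open>Random signs\<close>

lemma cosh_le_exp_half_square: "cosh x \<le> exp (x\<^sup>2 / 2)" for x :: real
proof -
  have "cosh y \<le> exp (y\<^sup>2 / 2)" if "0 \<le> y" for y :: real
  proof -
    have "1 + 1 / 2 * (exp (2 * y) - 1) = exp y * cosh y"
      by (simp add: cosh_field_def field_simps flip: exp_add)
    hence "ln (1 + 1 / 2 * (exp (2 * y) - 1)) = y + ln (cosh y)"
      by (simp add: ln_mult)
    with Hoeffdings_lemma_aux[of "2 * y" "1 / 2"] that have "ln (cosh y) \<le> y\<^sup>2 / 2"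
      by (simp add: power2_eq_square)
    thus ?thesis by (metis cosh_real_pos exp_le_cancel_iff exp_ln)
  qed
  from this[of "\<bar>x\<bar>"] show ?thesis by simp
qed

text \<open>
  A subset \<open>D \<subseteq> F\<close> encodes the signs \<open>-1\<close> on \<open>D\<close> and \<open>+1\<close> on \<open>F - D\<close>; counting subsets of \<open>F\<close>
  takes the place of the uniform distribution of independent Rademacher signs.
\<close>
definition sign_pattern :: "'a set \<Rightarrow> 'a \<Rightarrow> real" where
  "sign_pattern D v = (if v \<in> D then -1 else 1)"

lemma sign_pattern_square [simp]: "(sign_pattern D v)\<^sup>2 = 1"
  by (simp add: sign_pattern_def)

lemma sum_Pow_exp_signed_sum_le:
  fixes c :: "'a \<Rightarrow> real"
  assumes "finite F"
  shows "(\<Sum>D\<in>Pow F. exp (l * (\<Sum>v\<in>F. sign_pattern D v * c v)))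
    \<le> 2 ^ card F * exp (l\<^sup>2 * (\<Sum>v\<in>F. (c v)\<^sup>2) / 2)"
proof -
  have "(\<Sum>D\<in>Pow F. exp (l * (\<Sum>v\<in>F. sign_pattern D v * c v)))
      = (\<Sum>D\<in>Pow F. (\<Prod>v\<in>D. exp (- l * c v)) * (\<Prod>v\<in>F - D. exp (l * c v)))"
  proof (rule sum.cong)
    fix D assume "D \<in> Pow F"
    hence DF: "D \<subseteq> F" by simp
    have "exp (l * (\<Sum>v\<in>F. sign_pattern D v * c v)) = (\<Prod>v\<in>F. exp (l * (sign_pattern D v * c v)))"
      using assms by (simp add: sum_distrib_left exp_sum)
    also have "\<dots> = (\<Prod>v\<in>F - D. exp (l * (sign_pattern D v * c v))) * (\<Prod>v\<in>D. exp (l * (sign_pattern D v * c v)))"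
      using prod.subset_diff[OF DF assms] by simp
    also have "\<dots> = (\<Prod>v\<in>F - D. exp (l * c v)) * (\<Prod>v\<in>D. exp (- l * c v))"
      by (intro arg_cong2[where f = "(*)"] prod.cong) (auto simp: sign_pattern_def)
    finally show "exp (l * (\<Sum>v\<in>F. sign_pattern D v * c v))
        = (\<Prod>v\<in>D. exp (- l * c v)) * (\<Prod>v\<in>F - D. exp (l * c v))"
      by (simp only: mult.commute)
  qed simp
  also have "\<dots> = (\<Prod>v\<in>F. exp (- l * c v) + exp (l * c v))"
    by (rule prod_add[OF assms, symmetric])
  also have "\<dots> = (\<Prod>v\<in>F. 2 * cosh (l * c v))"
    by (intro prod.cong) (simp_all add: cosh_field_def)
  also have "\<dots> \<le> (\<Prod>v\<in>F. 2 * exp ((l * c v)\<^sup>2 / 2))"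
    by (intro prod_mono) (simp add: cosh_le_exp_half_square)
  also have "\<dots> = 2 ^ card F * exp (l\<^sup>2 * (\<Sum>v\<in>F. (c v)\<^sup>2) / 2)"
    using assms by (simp add: prod.distrib exp_sum sum_distrib_left sum_divide_distrib power_mult_distrib)
  finally show ?thesis .
qed

lemma card_signed_sum_ge_le:
  fixes c :: "'a \<Rightarrow> real"
  assumes F: "finite F" and a: "0 \<le> a" and S: "0 < (\<Sum>v\<in>F. (c v)\<^sup>2)"
  shows "real (card {D\<in>Pow F. a \<le> (\<Sum>v\<in>F. sign_pattern D v * c v)})
    \<le> exp (- a\<^sup>2 / (2 * (\<Sum>v\<in>F. (c v)\<^sup>2))) * 2 ^ card F"
proof -
  define S where "S = (\<Sum>v\<in>F. (c v)\<^sup>2)"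
  define l where "l = a / S"
  define Z where "Z = {D\<in>Pow F. a \<le> (\<Sum>v\<in>F. sign_pattern D v * c v)}"
  have l: "0 \<le> l" using a S by (simp add: l_def S_def)
  have "real (card Z) * exp (l * a) = (\<Sum>D\<in>Z. exp (l * a))" by simp
  also have "\<dots> \<le> (\<Sum>D\<in>Z. exp (l * (\<Sum>v\<in>F. sign_pattern D v * c v)))"
    using l by (intro sum_mono) (auto simp: Z_def mult_left_mono)
  also have "\<dots> \<le> (\<Sum>D\<in>Pow F. exp (l * (\<Sum>v\<in>F. sign_pattern D v * c v)))"
    using F by (intro sum_mono2) (auto simp: Z_def)
  also have "\<dots> \<le> 2 ^ card F * exp (l\<^sup>2 * S / 2)"
    using sum_Pow_exp_signed_sum_le[OF F] by (simp add: S_def)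
  finally have "real (card Z) \<le> 2 ^ card F * exp (l\<^sup>2 * S / 2 - l * a)"
    by (simp add: exp_diff pos_le_divide_eq)
  also have "l\<^sup>2 * S / 2 - l * a = - a\<^sup>2 / (2 * S)"
    using S by (simp add: l_def S_def field_simps power2_eq_square)
  finally show ?thesis by (simp add: Z_def S_def mult.commute)
qed

lemma card_signed_sum_square_gt_le:
  fixes c :: "'a \<Rightarrow> real"
  assumes F: "finite F" and s: "0 \<le> s"
  shows "real (card {D\<in>Pow F. s * (\<Sum>v\<in>F. (c v)\<^sup>2) < (\<Sum>v\<in>F. sign_pattern D v * c v)\<^sup>2})
    \<le> 2 * exp (- s / 2) * 2 ^ card F"
proof (cases "(\<Sum>v\<in>F. (c v)\<^sup>2) = 0")
  case True
  hence "\<forall>v\<in>F. c v = 0" using F by (simp add: sum_nonneg_eq_0_iff)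
  thus ?thesis using True by simp
next
  case False
  define S where "S = (\<Sum>v\<in>F. (c v)\<^sup>2)"
  have S: "0 < S" using False by (simp add: S_def order_le_neq_trans sum_nonneg)
  define a where "a = sqrt (s * S)"
  have a: "0 \<le> a" "a\<^sup>2 = s * S" using s S by (simp_all add: a_def)
  define Up where "Up c' = {D\<in>Pow F. a \<le> (\<Sum>v\<in>F. sign_pattern D v * c' v)}" for c' :: "'a \<Rightarrow> real"
  have tail: "real (card (Up c')) \<le> exp (- s / 2) * 2 ^ card F" if "(\<Sum>v\<in>F. (c' v)\<^sup>2) = S" for c'
    using card_signed_sum_ge_le[OF F a(1), of c'] that S a(2) by (simp add: Up_def)
  have sub: "{D\<in>Pow F. s * S < (\<Sum>v\<in>F. sign_pattern D v * c v)\<^sup>2} \<subseteq> Up c \<union> Up (\<lambda>v. - c v)"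
  proof
    fix D assume "D \<in> {D\<in>Pow F. s * S < (\<Sum>v\<in>F. sign_pattern D v * c v)\<^sup>2}"
    hence "D \<in> Pow F" "a\<^sup>2 < (\<Sum>v\<in>F. sign_pattern D v * c v)\<^sup>2" using a(2) by auto
    moreover from this(2) have "a < \<bar>\<Sum>v\<in>F. sign_pattern D v * c v\<bar>"
      using a(1) by (metis abs_le_square_iff abs_of_nonneg not_le)
    ultimately show "D \<in> Up c \<union> Up (\<lambda>v. - c v)" by (auto simp: Up_def sum_negf)
  qed
  have "card {D\<in>Pow F. s * S < (\<Sum>v\<in>F. sign_pattern D v * c v)\<^sup>2} \<le> card (Up c \<union> Up (\<lambda>v. - c v))"
    using F by (intro card_mono[OF _ sub]) (simp add: Up_def)
  also have "\<dots> \<le> card (Up c) + card (Up (\<lambda>v. - c v))"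
    by (rule card_Un_le)
  finally have "card {D\<in>Pow F. s * S < (\<Sum>v\<in>F. sign_pattern D v * c v)\<^sup>2} \<le> card (Up c) + card (Up (\<lambda>v. - c v))" .
  hence "real (card {D\<in>Pow F. s * S < (\<Sum>v\<in>F. sign_pattern D v * c v)\<^sup>2})
      \<le> real (card (Up c)) + real (card (Up (\<lambda>v. - c v)))"
    by linarith
  also have "\<dots> \<le> 2 * exp (- s / 2) * 2 ^ card F"
    using tail[of c] tail[of "\<lambda>v. - c v"] by (simp add: S_def)
  finally show ?thesis by (simp add: S_def)
qed

lemma exists_outside_union:
  assumes A: "finite A" and J: "finite J" and E: "\<And>j. j \<in> J \<Longrightarrow> E j \<subseteq> A"
    and small: "(\<Sum>j\<in>J. real (card (E j))) < real (card A)"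
  obtains x where "x \<in> A" "\<And>j. j \<in> J \<Longrightarrow> x \<notin> E j"
proof -
  have "real (card (\<Union>j\<in>J. E j)) \<le> (\<Sum>j\<in>J. real (card (E j)))"
    using card_UN_le[OF J, of E] by (simp flip: of_nat_sum)
  with small have "card (\<Union>j\<in>J. E j) < card A" by linarith
  hence "(\<Union>j\<in>J. E j) \<noteq> A" by blast
  moreover have "(\<Union>j\<in>J. E j) \<subseteq> A" using E by blast
  ultimately show thesis using that by blast
qed

lemma exists_sign_pattern_small_sums:
  fixes a :: "'j \<Rightarrow> 'a \<Rightarrow> real"
  assumes F: "finite F" and J: "finite J" and s: "0 \<le> s"
    and small: "real (card J) * (2 * exp (- s / 2)) < 1"
  obtains D where
    "\<And>j. j \<in> J \<Longrightarrow> (\<Sum>v\<in>F. sign_pattern D v * a j v)\<^sup>2 \<le> s * (\<Sum>v\<in>F. (a j v)\<^sup>2)"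
proof -
  define Bad where
    "Bad j = {D\<in>Pow F. s * (\<Sum>v\<in>F. (a j v)\<^sup>2) < (\<Sum>v\<in>F. sign_pattern D v * a j v)\<^sup>2}" for j
  have "(\<Sum>j\<in>J. real (card (Bad j))) \<le> (\<Sum>j\<in>J. 2 * exp (- s / 2) * 2 ^ card F)"
    unfolding Bad_def by (intro sum_mono card_signed_sum_square_gt_le[OF F s])
  also have "\<dots> < real (card (Pow F))"
    using small F by (simp add: card_Pow mult.assoc[symmetric])
  finally obtain D where "D \<in> Pow F" "\<And>j. j \<in> J \<Longrightarrow> D \<notin> Bad j"
    using exists_outside_union[of "Pow F" J Bad] F J by (auto simp: Bad_def)
  thus thesis by (intro that[of D]) (simp add: Bad_def not_less)
qed

section \<open>Randomized rounding\<close>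

lemma exists_signed_combination:
  fixes F :: "'a::euclidean_space set"
  assumes F: "orthonormal F" and t: "\<And>v. v \<in> F \<Longrightarrow> 0 \<le> t v" and J: "finite J" and s: "0 \<le> s"
    and small: "real (card J) * (2 * exp (- s / 2)) < 1"
  obtains w where "w \<in> span F" "(norm w)\<^sup>2 = (\<Sum>v\<in>F. t v)"
    "\<And>c. c \<in> J \<Longrightarrow> (c \<bullet> w)\<^sup>2 \<le> s * (\<Sum>v\<in>F. t v * (c \<bullet> v)\<^sup>2)"
proof -
  define a where "a c v = sqrt (t v) * (c \<bullet> v)" for c v
  obtain D where D: "\<And>c. c \<in> J \<Longrightarrow>
      (\<Sum>v\<in>F. sign_pattern D v * a c v)\<^sup>2 \<le> s * (\<Sum>v\<in>F. (a c v)\<^sup>2)"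
    using exists_sign_pattern_small_sums[OF orthonormal_imp_finite[OF F] J s small, where a = a] by blast
  define w where "w = (\<Sum>v\<in>F. (sign_pattern D v * sqrt (t v)) *\<^sub>R v)"
  show thesis
  proof (rule that[of w])
    show "w \<in> span F"
      unfolding w_def by (rule span_sum, rule span_mul, erule span_base)
    show "(norm w)\<^sup>2 = (\<Sum>v\<in>F. t v)"
      unfolding w_def norm_orthonormal_sum[OF F] using t by (intro sum.cong) (simp_all add: power_mult_distrib)
    fix c assume c: "c \<in> J"
    have "c \<bullet> w = (\<Sum>v\<in>F. sign_pattern D v * a c v)"
      by (simp add: w_def a_def inner_sum_right mult_ac)
    moreover have "(\<Sum>v\<in>F. (a c v)\<^sup>2) = (\<Sum>v\<in>F. t v * (c \<bullet> v)\<^sup>2)"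
      using t by (intro sum.cong) (simp_all add: a_def power_mult_distrib)
    ultimately show "(c \<bullet> w)\<^sup>2 \<le> s * (\<Sum>v\<in>F. t v * (c \<bullet> v)\<^sup>2)" using D[OF c] by simp
  qed
qed

lemma psd_family_compression:
  fixes H :: "'i \<Rightarrow> real^'n^'n"
  assumes F: "orthonormal F" and H: "\<And>i. i \<in> I \<Longrightarrow> psd (H i)"
  shows "\<exists>C. \<forall>i\<in>I. finite (C i) \<and> card (C i) \<le> min (rank (H i)) (card F) \<and>
    (\<forall>x\<in>span F. x \<bullet> (H i *v x) = (\<Sum>c\<in>C i. (c \<bullet> x)\<^sup>2))"
proof (rule bchoice, rule ballI)
  fix i assume "i \<in> I"
  show "\<exists>C. finite C \<and> card C \<le> min (rank (H i)) (card F) \<and>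
      (\<forall>x\<in>span F. x \<bullet> (H i *v x) = (\<Sum>c\<in>C. (c \<bullet> x)\<^sup>2))"
    by (rule psd_compression_sum_of_squares[OF H[OF \<open>i \<in> I\<close>] F]) auto
qed

lemma psd_rounding:
  fixes X :: "real^'n^'n" and H :: "'i \<Rightarrow> real^'n^'n"
  assumes X: "psd X" and I: "finite I" and H: "\<And>i. i \<in> I \<Longrightarrow> psd (H i)" and s: "0 \<le> s"
    and small: "(\<Sum>i\<in>I. real (min (rank (H i)) (card I + 1))) * (2 * exp (- s / 2)) < 1"
  obtains w where "(norm w)\<^sup>2 = trace X" "\<And>i. i \<in> I \<Longrightarrow> w \<bullet> (H i *v w) \<le> s * trace (H i ** X)"
proof (rule psd_low_rank_reduction[OF X I, of H])
  fix F t
  assume F: "orthonormal F" "card F \<le> card I + 1" "\<And>v. v \<in> F \<Longrightarrow> 0 \<le> t v"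
    "(\<Sum>v\<in>F. t v) = trace X" "\<And>i. i \<in> I \<Longrightarrow> (\<Sum>v\<in>F. t v * (v \<bullet> (H i *v v))) = trace (H i ** X)"
  from psd_family_compression[OF F(1) H] obtain C
    where "\<forall>i\<in>I. finite (C i) \<and> card (C i) \<le> min (rank (H i)) (card F) \<and>
      (\<forall>x\<in>span F. x \<bullet> (H i *v x) = (\<Sum>c\<in>C i. (c \<bullet> x)\<^sup>2))" ..
  hence C: "\<And>i. i \<in> I \<Longrightarrow> finite (C i)" "\<And>i. i \<in> I \<Longrightarrow> card (C i) \<le> min (rank (H i)) (card F)"
    "\<And>i x. i \<in> I \<Longrightarrow> x \<in> span F \<Longrightarrow> x \<bullet> (H i *v x) = (\<Sum>c\<in>C i. (c \<bullet> x)\<^sup>2)"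
    by auto
  have "card (\<Union>i\<in>I. C i) \<le> (\<Sum>i\<in>I. card (C i))" by (rule card_UN_le[OF I])
  also have "\<dots> \<le> (\<Sum>i\<in>I. min (rank (H i)) (card I + 1))"
    using C(2) F(2) by (intro sum_mono) (meson min.bounded_iff order_trans)
  finally have "real (card (\<Union>i\<in>I. C i)) * (2 * exp (- s / 2))
      \<le> (\<Sum>i\<in>I. real (min (rank (H i)) (card I + 1))) * (2 * exp (- s / 2))"
    unfolding of_nat_sum[symmetric] by (intro mult_right_mono of_nat_mono) simp_all
  with small have small': "real (card (\<Union>i\<in>I. C i)) * (2 * exp (- s / 2)) < 1" by linarith
  have "finite (\<Union>i\<in>I. C i)" using I C(1) by blast
  then obtain w where w: "w \<in> span F" "(norm w)\<^sup>2 = (\<Sum>v\<in>F. t v)"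
    "\<And>c. c \<in> (\<Union>i\<in>I. C i) \<Longrightarrow> (c \<bullet> w)\<^sup>2 \<le> s * (\<Sum>v\<in>F. t v * (c \<bullet> v)\<^sup>2)"
    using exists_signed_combination[where t = t, OF F(1,3) _ s small'] by blast
  show thesis
  proof (rule that[of w])
    show "(norm w)\<^sup>2 = trace X" using w(2) F(4) by simp
    fix i assume i: "i \<in> I"
    have "w \<bullet> (H i *v w) = (\<Sum>c\<in>C i. (c \<bullet> w)\<^sup>2)" by (rule C(3)[OF i w(1)])
    also have "\<dots> \<le> (\<Sum>c\<in>C i. s * (\<Sum>v\<in>F. t v * (c \<bullet> v)\<^sup>2))"
      using w(3) i by (intro sum_mono) blast
    also have "\<dots> = s * (\<Sum>v\<in>F. t v * (\<Sum>c\<in>C i. (c \<bullet> v)\<^sup>2))"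
      by (simp add: sum_distrib_left mult_ac sum.swap[of _ "C i"])
    also have "\<dots> = s * trace (H i ** X)"
      using C(3)[OF i] F(5)[OF i] by (simp add: span_base)
    finally show "w \<bullet> (H i *v w) \<le> s * trace (H i ** X)" .
  qed
qed

lemma sum_min_le_square_sum_min:
  fixes r :: "'a \<Rightarrow> nat"
  assumes "real n \<le> b\<^sup>2" "0 \<le> b"
  shows "(\<Sum>i\<in>A. real (min (r i) n)) \<le> (\<Sum>i\<in>A. min (real (r i)) b)\<^sup>2"
proof -
  have "real (min (r i) n) \<le> (min (real (r i)) b)\<^sup>2" for i
  proof (cases "real (r i) \<le> b")
    case True
    have "real (min (r i) n) \<le> real (r i)" by simp
    also have "\<dots> \<le> (real (r i))\<^sup>2" by (simp add: power2_eq_square le_square flip: of_nat_mult)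
    finally show ?thesis using True by simp
  next
    case False
    thus ?thesis using assms(1) by (simp add: min_def)
  qed
  hence "(\<Sum>i\<in>A. real (min (r i) n)) \<le> (\<Sum>i\<in>A. (min (real (r i)) b)\<^sup>2)"
    by (rule sum_mono)
  also have "\<dots> \<le> (\<Sum>i\<in>A. min (real (r i)) b)\<^sup>2"
  proof -
    have "sqrt (\<Sum>i\<in>A. (min (real (r i)) b)\<^sup>2) \<le> (\<Sum>i\<in>A. min (real (r i)) b)"
      using L2_set_le_sum[of A "\<lambda>i. min (real (r i)) b"] assms(2) by (simp add: L2_set_def)
    moreover have "0 \<le> (\<Sum>i\<in>A. (min (real (r i)) b)\<^sup>2)" by (rule sum_nonneg) simp
    ultimately have "(sqrt (\<Sum>i\<in>A. (min (real (r i)) b)\<^sup>2))\<^sup>2 \<le> (\<Sum>i\<in>A. min (real (r i)) b)\<^sup>2"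
      by (intro power_mono) simp_all
    thus ?thesis using \<open>0 \<le> (\<Sum>i\<in>A. (min (real (r i)) b)\<^sup>2)\<close> by simp
  qed
  finally show ?thesis .
qed

lemma failure_bound_lt_one:
  fixes A K :: real
  assumes "1 < 50 * K" "A \<le> K\<^sup>2"
  shows "A * (2 * exp (- (200 * ln (50 * K)) / 2)) < 1"
proof -
  define z where "z = 50 * K"
  have z: "1 < z" using assms(1) by (simp add: z_def)
  have e: "exp (- (200 * ln z) / 2) = inverse (z ^ 100)"
  proof -
    have "exp (100 * ln z) = z powr 100" using z by (simp add: powr_def)
    thus ?thesis using z by (simp add: exp_minus)
  qed
  moreover have "A \<le> z ^ 100 / 2500"
  proof -
    have "z\<^sup>2 \<le> z ^ 100" using z by (intro power_increasing) auto
    thus ?thesis using assms(2) by (simp add: z_def power_mult_distrib)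
  qed
  ultimately have "A * (2 * exp (- (200 * ln z) / 2)) \<le> z ^ 100 / 2500 * (2 * inverse (z ^ 100))"
    unfolding e using z by (intro mult_right_mono) auto
  also have "\<dots> < 1" using z by simp
  finally show ?thesis by (simp only: z_def)
qed

section \<open>The values of (P2) and (SDP3)\<close>

definition qp_feasible :: "(nat \<Rightarrow> real^'n^'n) \<Rightarrow> nat \<Rightarrow> nat \<Rightarrow> real \<Rightarrow> real^'n \<Rightarrow> (nat \<Rightarrow> real) \<Rightarrow> bool" where
  "qp_feasible H M Q \<epsilon> w \<beta> \<longleftrightarrow>
     (\<forall>i\<in>{1..M}. \<beta> i \<in> {0, 1}) \<and> (\<forall>i\<in>{1..M}. w \<bullet> (H i *v w) \<le> \<beta> i * \<epsilon> + (1 - \<beta> i)) \<and>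
     (\<Sum>i=1..M. \<beta> i) = real Q"

definition sdp_feasible :: "(nat \<Rightarrow> real^'n^'n) \<Rightarrow> nat \<Rightarrow> nat \<Rightarrow> real \<Rightarrow> real^'n^'n \<Rightarrow> (nat \<Rightarrow> real) \<Rightarrow> bool" where
  "sdp_feasible H M Q \<epsilon> X \<beta> \<longleftrightarrow> psd X \<and>
     (\<forall>i\<in>{1..M}. 0 \<le> \<beta> i \<and> \<beta> i \<le> 1) \<and> (\<forall>i\<in>{1..M}. trace (H i ** X) \<le> \<beta> i * \<epsilon> + (1 - \<beta> i)) \<and>
     (\<Sum>i=1..M. \<beta> i) = real Q"

lemma vQP_ge_feasible: "qp_feasible H M Q \<epsilon> w \<beta> \<Longrightarrow> ereal ((norm w)\<^sup>2) \<le> vQP H M Q \<epsilon>"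
  unfolding vQP_def by (rule SUP_upper2[of "(w, \<beta>)"]) (auto simp: qp_feasible_def)

lemma vSDP_eq_SUP_feasible:
  "vSDP H M Q \<epsilon> = (SUP p \<in> {(X, \<beta>). sdp_feasible H M Q \<epsilon> X \<beta>}. ereal (trace (fst p)))"
  by (simp add: vSDP_def sdp_feasible_def)

lemma vQP_nonneg:
  assumes "Q \<le> M" "0 \<le> \<epsilon>"
  shows "0 \<le> vQP H M Q \<epsilon>"
proof -
  have "(\<Sum>i=1..M. of_bool (i \<le> Q)) = (\<Sum>i=1..Q. 1 :: real)"
    using assms by (intro sum.mono_neutral_cong_right) auto
  hence "(\<Sum>i=1..M. of_bool (i \<le> Q)) = real Q" by simp
  hence "qp_feasible H M Q \<epsilon> 0 (\<lambda>i. of_bool (i \<le> Q))"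
    using assms(2) by (simp add: qp_feasible_def)
  from vQP_ge_feasible[OF this] show ?thesis by (simp add: zero_ereal_def)
qed

lemma sdp_feasible_zero:
  assumes "Q \<le> M" "0 < M" "0 \<le> \<epsilon>"
  shows "sdp_feasible H M Q \<epsilon> 0 (\<lambda>_. real Q / real M)"
proof -
  have "psd (0 :: real^'n^'n)" by (simp add: psd_def vec_eq_iff transpose_def)
  moreover have "0 \<le> real Q / real M * \<epsilon> + (1 - real Q / real M)"
    using assms by (simp add: divide_le_eq_1)
  ultimately show ?thesis
    using assms by (auto simp: sdp_feasible_def trace_def divide_le_eq_1)
qed

lemma vSDP_nonneg:
  assumes "Q \<le> M" "0 < M" "0 \<le> \<epsilon>"
  shows "0 \<le> vSDP H M Q \<epsilon>"
  unfolding vSDP_eq_SUP_feasible using sdp_feasible_zero[OF assms]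
  by (intro SUP_upper2[of "(0, \<lambda>_. real Q / real M)"]) (auto simp: trace_def)

lemma scaled_vSDP_le:
  assumes "0 \<le> a" "Q \<le> M" "0 < M" "0 \<le> \<epsilon>"
    and "\<And>X \<beta>. sdp_feasible H M Q \<epsilon> X \<beta> \<Longrightarrow> ereal (a * trace X) \<le> v"
  shows "ereal a * vSDP H M Q \<epsilon> \<le> v"
proof -
  have ne: "{(X, \<beta>). sdp_feasible H M Q \<epsilon> X \<beta>} \<noteq> {}"
    using sdp_feasible_zero[OF assms(2-4)] by blast
  thus ?thesis
    unfolding vSDP_eq_SUP_feasible Sup_ereal_mult_left'[OF ne assms(1)]
    using assms(5) by (auto intro!: SUP_least)
qed

lemma nonpos_scaled_vSDP_le_vQP:
  assumes "a \<le> 0" "Q \<le> M" "0 < M" "0 \<le> \<epsilon>"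
  shows "ereal a * vSDP H M Q \<epsilon> \<le> vQP H M Q \<epsilon>"
proof -
  have "ereal a * vSDP H M Q \<epsilon> \<le> 0"
    using assms by (simp add: ereal_mult_le_0_iff vSDP_nonneg)
  also have "0 \<le> vQP H M Q \<epsilon>" using assms by (simp add: vQP_nonneg)
  finally show ?thesis .
qed

lemma exists_subset_weights_ge:
  fixes \<beta> :: "'a \<Rightarrow> real"
  assumes A: "finite A" and Q: "Q \<le> card A" and \<beta>: "\<And>i. i \<in> A \<Longrightarrow> 0 \<le> \<beta> i \<and> \<beta> i \<le> 1"
    and sum\<beta>: "(\<Sum>i\<in>A. \<beta> i) = real Q"
  obtains S where "S \<subseteq> A" "card S = Q" "\<And>i. i \<in> S \<Longrightarrow> 1 / (real (card A) - real Q + 1) \<le> \<beta> i"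
proof -
  define d where "d = real (card A) - real Q + 1"
  have d: "1 \<le> d" using Q by (simp add: d_def)
  define L where "L = {i\<in>A. 1 / d \<le> \<beta> i}"
  have "Q \<le> card L"
  proof (rule ccontr)
    assume "\<not> Q \<le> card L"
    hence k: "card L < Q" by simp
    have LA: "L \<subseteq> A" by (auto simp: L_def)
    hence "A - L \<noteq> {}" using A k Q card_mono by fastforce
    hence "(\<Sum>i\<in>A - L. \<beta> i) < (\<Sum>i\<in>A - L. 1 / d)"
      using A by (intro sum_strict_mono) (auto simp: L_def)
    also have "\<dots> = (real (card A) - real (card L)) / d"
      using A LA by (simp add: card_Diff_subset finite_subset of_nat_diff card_mono)
    finally have "(\<Sum>i\<in>A - L. \<beta> i) < (real (card A) - real (card L)) / d" .
    moreover have "(\<Sum>i\<in>L. \<beta> i) \<le> real (card L)"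
      using \<beta> LA sum_bounded_above[of L \<beta> 1] by auto
    moreover have "(\<Sum>i\<in>A. \<beta> i) = (\<Sum>i\<in>L. \<beta> i) + (\<Sum>i\<in>A - L. \<beta> i)"
      using A LA by (simp add: sum.subset_diff)
    ultimately have "real Q < real (card L) + (real (card A) - real (card L)) / d"
      using sum\<beta> by linarith
    hence "real Q * d < real (card L) * d + (real (card A) - real (card L))"
      using d by (simp add: field_simps)
    moreover have "0 \<le> (real Q - real (card L) - 1) * (real (card A) - real Q)"
      using k Q by (intro mult_nonneg_nonneg) auto
    ultimately show False by (simp add: d_def algebra_simps)
  qed
  then obtain S where "S \<subseteq> L" "card S = Q" by (meson obtain_subset_with_card_n)
  thus thesis by (intro that[of S]) (auto simp: L_def d_def)
qed

lemma rescaling_factor_ge: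
  assumes "Q \<le> M" "\<epsilon> \<le> 1"
  shows "\<epsilon> \<le> 1 - (1 - \<epsilon>) / (real M - real Q + 1)"
proof -
  have "(1 - \<epsilon>) / (real M - real Q + 1) \<le> (1 - \<epsilon>) / 1"
    using assms by (intro divide_left_mono) auto
  thus ?thesis by simp
qed

lemma rescaled_constraint_le:
  fixes \<epsilon> c \<beta> T :: real
  assumes e: "0 < \<epsilon>" "\<epsilon> \<le> c" and \<beta>: "0 \<le> \<beta>" "\<beta> \<le> 1" and e1: "\<epsilon> \<le> 1"
    and T: "T \<le> \<beta> * \<epsilon> + (1 - \<beta>)"
  shows "\<epsilon> / c * T \<le> 1" and "1 - c \<le> (1 - \<epsilon>) * \<beta> \<Longrightarrow> \<epsilon> / c * T \<le> \<epsilon>"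
proof -
  have ec: "0 < \<epsilon> / c" "\<epsilon> / c * c = \<epsilon>" "\<epsilon> / c \<le> 1" using e by simp_all
  have T': "T \<le> 1 - (1 - \<epsilon>) * \<beta>" using T by (simp add: algebra_simps)
  moreover have "0 \<le> (1 - \<epsilon>) * \<beta>" using e1 \<beta> by simp
  ultimately have "\<epsilon> / c * T \<le> \<epsilon> / c * 1" using ec by (intro mult_left_mono) simp_all
  thus "\<epsilon> / c * T \<le> 1" using ec by simp
  assume "1 - c \<le> (1 - \<epsilon>) * \<beta>"
  hence "\<epsilon> / c * T \<le> \<epsilon> / c * c" using ec T' by (intro mult_left_mono) simp_all
  thus "\<epsilon> / c * T \<le> \<epsilon>" using ec by simp
qed

lemma sdp_feasible_rescaled_binary:
  fixes H :: "nat \<Rightarrow> real^'n^'n" and M Q :: nat and \<epsilon> :: real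
  defines "c \<equiv> 1 - (1 - \<epsilon>) / (real M - real Q + 1)"
  assumes M: "Q \<le> M" and e: "0 < \<epsilon>" "\<epsilon> < 1" and X: "sdp_feasible H M Q \<epsilon> X \<beta>"
  obtains b where "\<forall>i\<in>{1..M}. b i \<in> {0, 1}" "(\<Sum>i=1..M. b i) = real Q"
    "\<And>i. i \<in> {1..M} \<Longrightarrow> \<epsilon> / c * trace (H i ** X) \<le> b i * \<epsilon> + (1 - b i)"
proof -
  have c: "\<epsilon> \<le> c" unfolding c_def using M e by (intro rescaling_factor_ge) auto
  have X: "\<And>i. i \<in> {1..M} \<Longrightarrow> 0 \<le> \<beta> i \<and> \<beta> i \<le> 1"
    "\<And>i. i \<in> {1..M} \<Longrightarrow> trace (H i ** X) \<le> \<beta> i * \<epsilon> + (1 - \<beta> i)" "(\<Sum>i=1..M. \<beta> i) = real Q"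
    using X by (auto simp: sdp_feasible_def)
  obtain S where S: "S \<subseteq> {1..M}" "card S = Q" "\<And>i. i \<in> S \<Longrightarrow> 1 / (real M - real Q + 1) \<le> \<beta> i"
    using exists_subset_weights_ge[of "{1..M}" Q \<beta>] M X(1,3) by auto
  show thesis
  proof (rule that[of "\<lambda>i. of_bool (i \<in> S)"])
    show "(\<Sum>i=1..M. of_bool (i \<in> S)) = real Q"
      using S(1,2) by (simp add: Int_absorb1 flip: sum.inter_filter)
    fix i assume i: "i \<in> {1..M}"
    have "1 - c \<le> (1 - \<epsilon>) * \<beta> i" if "i \<in> S"
      using mult_left_mono[OF S(3)[OF that], of "1 - \<epsilon>"] e by (simp add: c_def)
    thus "\<epsilon> / c * trace (H i ** X) \<le> of_bool (i \<in> S) * \<epsilon> + (1 - of_bool (i \<in> S))"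
      using rescaled_constraint_le[OF e(1) c _ _ _ X(2)[OF i]] X(1)[OF i] e by (cases "i \<in> S") auto
  qed auto
qed

lemma sdp_feasible_scaled_trace_le_vQP:
  fixes H :: "nat \<Rightarrow> real^'n^'n" and M Q :: nat and \<epsilon> :: real
  defines "K \<equiv> (\<Sum>i=1..M. min (real (rank (H i))) (sqrt (2 * real M)))"
    and "c \<equiv> 1 - (1 - \<epsilon>) / (real M - real Q + 1)"
  assumes M: "1 \<le> M" "Q \<le> M" and e: "0 < \<epsilon>" "\<epsilon> < 1"
    and H: "\<forall>i\<in>{1..M}. psd (H i)" and X: "sdp_feasible H M Q \<epsilon> X \<beta>"
    and K: "1 < 50 * K"
  shows "ereal (\<epsilon> / c * (1 / (200 * ln (50 * K))) * trace X) \<le> vQP H M Q \<epsilon>"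
proof -
  have c: "0 < c" unfolding c_def using M e rescaling_factor_ge[of Q M \<epsilon>] by linarith
  obtain b where b: "\<forall>i\<in>{1..M}. b i \<in> {0, 1}" "(\<Sum>i=1..M. b i) = real Q"
    "\<And>i. i \<in> {1..M} \<Longrightarrow> \<epsilon> / c * trace (H i ** X) \<le> b i * \<epsilon> + (1 - b i)"
    using sdp_feasible_rescaled_binary[OF M(2) e X] unfolding c_def by blast
  define s where "s = 200 * ln (50 * K)"
  have s: "0 < s" using K by (simp add: s_def)
  have "(\<Sum>i\<in>{1..M}. real (min (rank (H i)) (card {1..M} + 1))) \<le> K\<^sup>2"
    unfolding K_def using M by (intro sum_min_le_square_sum_min) auto
  hence small: "(\<Sum>i\<in>{1..M}. real (min (rank (H i)) (card {1..M} + 1))) * (2 * exp (- s / 2)) < 1"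
    unfolding s_def by (rule failure_bound_lt_one[OF K])
  have "psd X" using X by (simp add: sdp_feasible_def)
  moreover have H': "\<And>i. i \<in> {1..M} \<Longrightarrow> psd (H i)" using H by blast
  ultimately obtain w where w: "(norm w)\<^sup>2 = trace X"
    "\<And>i. i \<in> {1..M} \<Longrightarrow> w \<bullet> (H i *v w) \<le> s * trace (H i ** X)"
    using psd_rounding[OF _ finite_atLeastAtMost H' less_imp_le[OF s] small] by blast
  define w' where "w' = sqrt (\<epsilon> / (c * s)) *\<^sub>R w"
  have "w' \<bullet> (H i *v w') \<le> \<epsilon> / c * trace (H i ** X)" if "i \<in> {1..M}" for i
  proof -
    have "w' \<bullet> (H i *v w') = \<epsilon> / (c * s) * (w \<bullet> (H i *v w))"
      using e c s by (simp add: w'_def matrix_vector_mult_scaleR mult.assoc[symmetric])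
    also have "\<dots> \<le> \<epsilon> / (c * s) * (s * trace (H i ** X))"
      using w(2)[OF that] e c s by (intro mult_left_mono) simp_all
    finally show ?thesis using s by simp
  qed
  hence "qp_feasible H M Q \<epsilon> w' b"
    using b by (force simp: qp_feasible_def)
  moreover have "(norm w')\<^sup>2 = \<epsilon> / c * (1 / s) * trace X"
    using e c s by (simp add: w'_def power_mult_distrib w(1))
  ultimately show ?thesis
    using vQP_ge_feasible by (fastforce simp: s_def)
qed

theorem theorem3p3:
  fixes H :: "nat \<Rightarrow> real^'n^'n" and M Q :: nat and \<epsilon> :: real
  assumes "CARD('n) \<ge> 2"
    and "M \<ge> 2" and "1 \<le> Q" and "Q \<le> M - 1"
    and "0 < \<epsilon>" and "\<epsilon> < 1"
    and "\<forall>i\<in>{1..M}. psd (H i)"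
  shows "let K = (\<Sum>i=1..M. min (real (rank (H i))) (sqrt (2 * real M)));
             c = 1 - (1 - \<epsilon>) / (real M - real Q + 1)
         in vQP H M Q \<epsilon> \<ge> ereal (\<epsilon> / c * (1 / (200 * ln (50 * K)))) * vSDP H M Q \<epsilon>"
proof -
  define K where "K = (\<Sum>i=1..M. min (real (rank (H i))) (sqrt (2 * real M)))"
  define c where "c = 1 - (1 - \<epsilon>) / (real M - real Q + 1)"
  have c: "0 < c" unfolding c_def using assms(2-6) rescaling_factor_ge[of Q M \<epsilon>] by linarith
  have "ereal (\<epsilon> / c * (1 / (200 * ln (50 * K)))) * vSDP H M Q \<epsilon> \<le> vQP H M Q \<epsilon>"
  proof (cases "1 < 50 * K")
    case True
    thus ?thesis
      using assms c sdp_feasible_scaled_trace_le_vQP[of M Q \<epsilon> H]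
      by (intro scaled_vSDP_le) (auto simp: K_def c_def)
  next
    case False
    \<comment> \<open>Then \<open>ln (50 * K) \<le> 0\<close> (with \<open>ln 0 = 0\<close> if \<open>K = 0\<close>), so the factor is nonpositive.\<close>
    have "0 \<le> K" unfolding K_def by (intro sum_nonneg) simp
    with False have "ln (50 * K) \<le> 0" by (cases "K = 0") auto
    hence "\<epsilon> / c * (1 / (200 * ln (50 * K))) \<le> 0"
      using assms(5) c by (simp add: divide_nonneg_nonpos mult_nonneg_nonpos)
    thus ?thesis using assms by (intro nonpos_scaled_vSDP_le_vQP) simp_all
  qed
  thus ?thesis unfolding Let_def K_def c_def by simp
qed

end
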